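(* Let $\Psi=\{\psi_i\}_{i\in I}$ be a lower frame sequence in a separable Hilbert space $\mathcal{H}$ with canonical dual $\widetilde\Psi=\{\widetilde\psi_i\}_{i\in I}$, and let $h\in\mathcal{H}$. Suppose $h$ is represented weakly by $\Psi$, i.e. there is a scalar sequence $\{c_i\}_{i\in I}$ such that $\langle h,g\rangle=\langle\sum_{i\in I}c_i\psi_i,g\rangle=\sum_{i\in I}c_i\langle\psi_i,g\rangle$ for all $g\in\mathcal{D}(C_\Psi)$. Then $$\sum_{i\in I}|c_i|^2=\sum_{i\in I}|\langle h,\widetilde\psi_i\rangle|^2+\sum_{i\in I}|c_i-\langle h,\widetilde\psi_i\rangle|^2.$$ In particular $\sum_i|c_i|^2\ge\sum_i|\langle h,\widetilde\psi_i\rangle|^2$.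
   Context: $I$ is countable. $\mathcal{D}(C_\Psi)=\{f\in\mathcal{H}:\{\langle f,\psi_i\rangle\}_i\in\ell^2\}$, $\mathcal{H}_\Psi:=\overline{\mathcal{D}(C_\Psi)}$, $\pi_{\mathcal{H}_\Psi}$ the orthogonal projection onto $\mathcal{H}_\Psi$. $\Psi$ is a lower frame sequence if there is $A>0$ with $A\|f\|^2\le\sum_i|\langle f,\psi_i\rangle|^2$ for all $f\in\mathcal{D}(C_\Psi)$. The generalized frame operator is $\Gamma_\Psi:=(C^r_\Psi)^*C^r_\Psi$, where $C^r_\Psi:\mathcal{D}(C_\Psi)\subseteq\mathcal{H}_\Psi\to\ell^2$, $C^r_\Psi f=\{\langle f,\psi_i\rangle\}_i$; for a lower frame sequence $\Gamma_\Psi:\mathcal{D}(\Gamma_\Psi)\to\mathcal{H}_\Psi$ is bijective with bounded inverse on $\mathcal{H}_\Psi$. The canonical dual is $\widetilde\psi_i:=\Gamma_\Psi^{-1}\pi_{\mathcal{H}_\Psi}\psi_i$. *)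

theory Defs
  imports "HOL-Analysis.Analysis"
begin

text \<open>HOL-Analysis only provides real inner product spaces, so we introduce complex
inner product spaces. The inner product is linear in the FIRST argument and
conjugate-linear in the second (mathematicians' convention, as in the paper:
the weak representation reads h = sum c_i psi_i). The norm is the one induced
by the inner product; a complex Hilbert space is a type of class
complex_inner and complete_space.\<close>

class complex_inner = real_normed_vector +
  fixes scaleC :: "complex \<Rightarrow> 'a \<Rightarrow> 'a" (infixr "*\<^sub>C" 75)
  fixes cinner :: "'a \<Rightarrow> 'a \<Rightarrow> complex"
  assumes scaleC_add_right: "a *\<^sub>C (x + y) = a *\<^sub>C x + a *\<^sub>C y"
    and scaleC_add_left: "(a + b) *\<^sub>C x = a *\<^sub>C x + b *\<^sub>C x"
    and scaleC_scaleC: "a *\<^sub>C (b *\<^sub>C x) = (a * b) *\<^sub>C x"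
    and scaleC_one: "1 *\<^sub>C x = x"
    and scaleR_scaleC: "scaleR r x = complex_of_real r *\<^sub>C x"
    and cinner_commute: "cinner x y = cnj (cinner y x)"
    and cinner_add_left: "cinner (x + y) z = cinner x z + cinner y z"
    and cinner_scaleC_left: "cinner (a *\<^sub>C x) y = a * cinner x y"
    and cinner_self_norm: "cinner x x = complex_of_real ((norm x)\<^sup>2)"

definition dom_C :: "'i set \<Rightarrow> ('i \<Rightarrow> 'a::complex_inner) \<Rightarrow> 'a set" where
  "dom_C I \<psi> = {f. (\<lambda>i. (cmod (cinner f (\<psi> i)))\<^sup>2) summable_on I}"

definition H_Psi :: "'i set \<Rightarrow> ('i \<Rightarrow> 'a::complex_inner) \<Rightarrow> 'a set" where
  "H_Psi I \<psi> = closure (dom_C I \<psi>)"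

definition lower_frame_seq :: "'i set \<Rightarrow> ('i \<Rightarrow> 'a::complex_inner) \<Rightarrow> bool" where
  "lower_frame_seq I \<psi> \<longleftrightarrow> (\<exists>A>0. \<forall>f\<in>dom_C I \<psi>.
      A * (norm f)\<^sup>2 \<le> (\<Sum>\<^sub>\<infinity>i\<in>I. (cmod (cinner f (\<psi> i)))\<^sup>2))"

definition l2 :: "'i set \<Rightarrow> ('i \<Rightarrow> complex) set" where
  "l2 I = {a. (\<lambda>i. (cmod (a i))\<^sup>2) summable_on I}"

definition l2_inner :: "'i set \<Rightarrow> ('i \<Rightarrow> complex) \<Rightarrow> ('i \<Rightarrow> complex) \<Rightarrow> complex" where
  "l2_inner I a b = (\<Sum>\<^sub>\<infinity>i\<in>I. a i * cnj (b i))"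

text \<open>Graph of the adjoint (C^r_Psi)^* of
  C^r_Psi : D(C_Psi) \<subseteq> H_Psi \<rightarrow> l^2(I):
  a is in its domain and (C^r_Psi)^* a = u iff u \<in> H_Psi and
  <C^r_Psi g, a>_{l^2} = <g, u> for all g in D(C_Psi).\<close>
definition adjC_rel :: "'i set \<Rightarrow> ('i \<Rightarrow> 'a::complex_inner) \<Rightarrow> ('i \<Rightarrow> complex) \<Rightarrow> 'a \<Rightarrow> bool" where
  "adjC_rel I \<psi> a u \<longleftrightarrow> a \<in> l2 I \<and> u \<in> H_Psi I \<psi> \<and>
     (\<forall>g\<in>dom_C I \<psi>. l2_inner I (\<lambda>i. cinner g (\<psi> i)) a = cinner g u)"

text \<open>Graph of the generalized frame operator Gamma_Psi = (C^r_Psi)^* C^r_Psi.\<close>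
definition gen_frame_op_rel :: "'i set \<Rightarrow> ('i \<Rightarrow> 'a::complex_inner) \<Rightarrow> 'a \<Rightarrow> 'a \<Rightarrow> bool" where
  "gen_frame_op_rel I \<psi> f u \<longleftrightarrow> f \<in> dom_C I \<psi> \<and> adjC_rel I \<psi> (\<lambda>i. cinner f (\<psi> i)) u"

definition orth_proj :: "'a::complex_inner set \<Rightarrow> 'a \<Rightarrow> 'a" where
  "orth_proj S x = (THE y. y \<in> S \<and> (\<forall>z\<in>S. cinner (x - y) z = 0))"

text \<open>Canonical dual: tilde psi_i = Gamma_Psi^{-1} (pi_{H_Psi} psi_i).\<close>
definition canonical_dual :: "'i set \<Rightarrow> ('i \<Rightarrow> 'a::complex_inner) \<Rightarrow> 'i \<Rightarrow> 'a" where
  "canonical_dual I \<psi> i = (THE f. gen_frame_op_rel I \<psi> f (orth_proj (H_Psi I \<psi>) (\<psi> i)))"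

end

theory Submission
  imports Defs
begin

text \<open>Let B(f,g) = sum_i <f,psi_i> cnj <g,psi_i> be the frame form on D(C_Psi). The
lower frame bound makes B coercive and D(C_Psi) complete for it, so the Riesz representation
theorem (proved by minimising the energy B(u,u) - 2 Re <u,x>) gives for every x a unique f in
D(C_Psi) with B(g,f) = <g,x> for all g in D(C_Psi). As <g, pi x> = <g,x> on D(C_Psi), this
f is Gamma_Psi^-1 pi x; in particular the canonical dual vector psi'_i represents <-,psi_i>.
If f represents <-,h>, then <h,psi'_i> = B(f,psi'_i) = <f,psi_i> =: d_i, and testing the weak
representation against g = f gives sum_i c_i cnj d_i = <h,f> = B(f,f) = sum_i |d_i|^2.
Expanding |c_i - d_i|^2 = |c_i|^2 - 2 Re (c_i cnj d_i) + |d_i|^2 yields the identity, read in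
[0,infinity] so that both sides may diverge.\<close>

lemma scaleC_zero_left [simp]: "(0::complex) *\<^sub>C x = (0::'a::complex_inner)"
  using scaleC_add_left[of 0 0 x] by simp

lemma scaleC_minus_left: "(- a) *\<^sub>C x = - (a *\<^sub>C x :: 'a::complex_inner)"
  using scaleC_add_left[of a "- a" x] by (simp add: eq_neg_iff_add_eq_0 add.commute)

lemma scaleC_minus1 [simp]: "(- 1) *\<^sub>C x = - (x :: 'a::complex_inner)"
  by (simp add: scaleC_minus_left scaleC_one)

lemma cinner_zero_left [simp]: "cinner 0 (y::'a::complex_inner) = 0"
  using cinner_add_left[of 0 0 y] by simp

lemma cinner_minus_left: "cinner (- x) (y::'a::complex_inner) = - cinner x y"
  using cinner_add_left[of x "- x" y] by (simp add: eq_neg_iff_add_eq_0 add.commute)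

lemma cinner_diff_left: "cinner (x - z) (y::'a::complex_inner) = cinner x y - cinner z y"
  using cinner_add_left[of x "- z" y] by (simp add: cinner_minus_left)

lemma cinner_scaleC_right: "cinner x (a *\<^sub>C (y::'a::complex_inner)) = cnj a * cinner x y"
  by (metis cinner_commute cinner_scaleC_left complex_cnj_mult)

lemma cinner_diff_right: "cinner x (y - z::'a::complex_inner) = cinner x y - cinner x z"
  by (metis cinner_commute cinner_diff_left complex_cnj_diff)

lemma Re_cinner_self: "Re (cinner x (x::'a::complex_inner)) = (norm x)\<^sup>2"
  by (simp add: cinner_self_norm)

lemma norm_scaleC: "norm (a *\<^sub>C x) = cmod a * norm (x::'a::complex_inner)"
proof -
  have "cinner (a *\<^sub>C x) (a *\<^sub>C x) = (a * cnj a) * cinner x x"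
    by (simp add: cinner_scaleC_left cinner_scaleC_right mult.assoc)
  also have "\<dots> = complex_of_real ((cmod a * norm x)\<^sup>2)"
    by (simp only: complex_norm_square [symmetric] cinner_self_norm power_mult_distrib of_real_mult)
  finally have "(norm (a *\<^sub>C x))\<^sup>2 = (cmod a * norm x)\<^sup>2"
    by (metis cinner_self_norm of_real_eq_iff)
  then show ?thesis by (simp add: power2_eq_iff_nonneg)
qed

section \<open>Coercive Hermitian forms\<close>

locale coercive_hermitian_form =
  fixes S :: "'a::complex_inner set" and B :: "'a \<Rightarrow> 'a \<Rightarrow> complex" and A :: real
  assumes zero_mem: "0 \<in> S"
    and add_mem: "u \<in> S \<Longrightarrow> v \<in> S \<Longrightarrow> u + v \<in> S"
    and scaleC_mem: "u \<in> S \<Longrightarrow> a *\<^sub>C u \<in> S"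
    and add_left: "u \<in> S \<Longrightarrow> v \<in> S \<Longrightarrow> w \<in> S \<Longrightarrow> B (u + v) w = B u w + B v w"
    and scaleC_left: "u \<in> S \<Longrightarrow> w \<in> S \<Longrightarrow> B (a *\<^sub>C u) w = a * B u w"
    and commute: "u \<in> S \<Longrightarrow> w \<in> S \<Longrightarrow> B u w = cnj (B w u)"
    and A_pos: "0 < A"
    and coercive: "u \<in> S \<Longrightarrow> A * (norm u)\<^sup>2 \<le> Re (B u u)"
begin

abbreviation Q :: "'a \<Rightarrow> real" where
  "Q u \<equiv> Re (B u u)"

lemma minus_mem: "u \<in> S \<Longrightarrow> - u \<in> S"
  using scaleC_mem[of u "- 1"] by simp

lemma diff_mem: "u \<in> S \<Longrightarrow> v \<in> S \<Longrightarrow> u - v \<in> S"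
  using add_mem[OF _ minus_mem, of u v] by simp

lemma add_right: "u \<in> S \<Longrightarrow> v \<in> S \<Longrightarrow> w \<in> S \<Longrightarrow> B w (u + v) = B w u + B w v"
  by (metis commute add_left add_mem complex_cnj_add)

lemma scaleC_right: "u \<in> S \<Longrightarrow> w \<in> S \<Longrightarrow> B w (a *\<^sub>C u) = cnj a * B w u"
  by (metis commute scaleC_left scaleC_mem complex_cnj_mult)

lemma diff_right: "u \<in> S \<Longrightarrow> v \<in> S \<Longrightarrow> w \<in> S \<Longrightarrow> B w (u - v) = B w u - B w v"
  using add_right[OF _ minus_mem] scaleC_right[of v w "- 1"] by (simp add: minus_mem)

lemma zero_right [simp]: "w \<in> S \<Longrightarrow> B w 0 = 0"
  using scaleC_right[OF zero_mem, of w 0] by simp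

lemma Q_nonneg: "u \<in> S \<Longrightarrow> 0 \<le> Q u"
  using coercive A_pos by (meson mult_nonneg_nonneg order_trans less_imp_le zero_le_power2)

lemma Q_add: "u \<in> S \<Longrightarrow> v \<in> S \<Longrightarrow> Q (u + v) = Q u + Q v + 2 * Re (B u v)"
  using commute[of v u] by (simp add: add_left add_right add_mem)

lemma Q_scaleC: "u \<in> S \<Longrightarrow> Q (a *\<^sub>C u) = (cmod a)\<^sup>2 * Q u"
proof -
  assume u: "u \<in> S"
  have "B (a *\<^sub>C u) (a *\<^sub>C u) = (a * cnj a) * B u u"
    using u by (simp add: scaleC_left scaleC_right scaleC_mem mult.assoc)
  then show ?thesis
    by (simp add: complex_norm_square [symmetric] del: of_real_power)
qed

lemma Cauchy_Schwarz:
  assumes u: "u \<in> S" and v: "v \<in> S"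
  shows "cmod (B u v) \<le> sqrt (Q u) * sqrt (Q v)"
proof (cases "v = 0")
  case False
  then have "0 < A * (norm v)\<^sup>2"
    using A_pos by simp
  then have Qv: "0 < Q v"
    using coercive[OF v] by linarith
  define a where "a = B u v / complex_of_real (Q v)"
  have "cnj a * B u v = complex_of_real ((cmod (B u v))\<^sup>2 / Q v)"
    by (simp add: a_def complex_norm_square mult.commute del: of_real_power)
  moreover have "(cmod a)\<^sup>2 * Q v = (cmod (B u v))\<^sup>2 / Q v"
    using Qv by (simp add: a_def norm_divide power_divide power2_eq_square)
  ultimately have "(cmod (B u v))\<^sup>2 / Q v \<le> Q u"
    using Q_nonneg[OF add_mem[OF u scaleC_mem[OF v]], of "- a"]
    unfolding Q_add[OF u scaleC_mem[OF v]] Q_scaleC[OF v] scaleC_right[OF v u] by simp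
  then have "(cmod (B u v))\<^sup>2 \<le> Q u * Q v"
    using Qv by (simp add: divide_le_eq)
  then show ?thesis
    by (simp add: real_le_rsqrt real_sqrt_mult [symmetric])
qed (simp add: u zero_mem Q_nonneg)

end

lemma coercive_hermitian_form_cinner:
  assumes "0 \<in> S" and "\<And>u v. u \<in> S \<Longrightarrow> v \<in> S \<Longrightarrow> u + v \<in> S"
    and "\<And>a u. u \<in> S \<Longrightarrow> a *\<^sub>C u \<in> S"
  shows "coercive_hermitian_form S (cinner :: 'a::complex_inner \<Rightarrow> 'a \<Rightarrow> complex) 1"
  using assms by unfold_locales
    (simp_all add: cinner_add_left cinner_scaleC_left cinner_commute [symmetric] Re_cinner_self)

lemma cinner_Cauchy_Schwarz: "cmod (cinner x y) \<le> norm x * norm (y::'a::complex_inner)"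
proof -
  interpret coercive_hermitian_form "UNIV :: 'a set" cinner 1
    by (rule coercive_hermitian_form_cinner) simp_all
  show ?thesis
    using Cauchy_Schwarz[of x y] by (simp add: Re_cinner_self)
qed

lemma bounded_linear_cinner_left: "bounded_linear (\<lambda>x::'a::complex_inner. cinner x y)"
proof
  show "cinner (x + z) y = cinner x y + cinner z y" for x z
    by (rule cinner_add_left)
  show "cinner (r *\<^sub>R x) y = r *\<^sub>R cinner x y" for r x
    by (simp add: scaleR_scaleC cinner_scaleC_left scaleR_conv_of_real)
  show "\<exists>K. \<forall>x. norm (cinner x y) \<le> norm x * K"
    using cinner_Cauchy_Schwarz by blast
qed

lemma bounded_linear_scaleC: "bounded_linear (\<lambda>x::'a::complex_inner. a *\<^sub>C x)"
proof
  show "a *\<^sub>C (x + z) = a *\<^sub>C x + a *\<^sub>C z" for x z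
    by (rule scaleC_add_right)
  show "a *\<^sub>C (r *\<^sub>R x) = r *\<^sub>R (a *\<^sub>C x)" for r x
    by (simp add: scaleR_scaleC scaleC_scaleC mult.commute)
  show "\<exists>K. \<forall>x. norm (a *\<^sub>C x) \<le> norm x * K"
    by (rule exI[of _ "cmod a"]) (simp add: norm_scaleC mult.commute)
qed

lemma closure_add_mem:
  assumes "\<And>u v. u \<in> S \<Longrightarrow> v \<in> S \<Longrightarrow> u + v \<in> S"
    and "u \<in> closure S" and "v \<in> closure S"
  shows "u + v \<in> closure (S :: 'a::real_normed_vector set)"
proof -
  obtain X Y where "\<forall>n. X n \<in> S" "X \<longlonglongrightarrow> u" "\<forall>n. Y n \<in> S" "Y \<longlonglongrightarrow> v"
    using assms(2,3) unfolding closure_sequential by blast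
  then have "\<forall>n. X n + Y n \<in> S" "(\<lambda>n. X n + Y n) \<longlonglongrightarrow> u + v"
    using assms(1) by (auto intro: tendsto_add)
  then show ?thesis
    unfolding closure_sequential by (intro exI[of _ "\<lambda>n. X n + Y n"] conjI)
qed

lemma closure_scaleC_mem:
  assumes "\<And>u. u \<in> S \<Longrightarrow> a *\<^sub>C u \<in> S" and "u \<in> closure S"
  shows "a *\<^sub>C u \<in> closure (S :: 'a::complex_inner set)"
proof -
  obtain X where "\<forall>n. X n \<in> S" "X \<longlonglongrightarrow> u"
    using assms(2) unfolding closure_sequential by blast
  then have "\<forall>n. a *\<^sub>C X n \<in> S" "(\<lambda>n. a *\<^sub>C X n) \<longlonglongrightarrow> a *\<^sub>C u"
    using assms(1) bounded_linear.tendsto[OF bounded_linear_scaleC] by auto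
  then show ?thesis
    unfolding closure_sequential by (intro exI[of _ "\<lambda>n. a *\<^sub>C X n"] conjI)
qed

section \<open>Energy minimisation and the Riesz representation\<close>

context coercive_hermitian_form
begin

text \<open>The Riesz representative of <-,x> on S is the minimiser of this energy.\<close>

definition energy :: "'a \<Rightarrow> 'a \<Rightarrow> real" where
  "energy x u = Q u - 2 * Re (cinner u x)"

definition form_Cauchy :: "(nat \<Rightarrow> 'a) \<Rightarrow> bool" where
  "form_Cauchy y \<longleftrightarrow> (\<forall>e>0. \<exists>N. \<forall>m\<ge>N. \<forall>n\<ge>N. Q (y m - y n) < e)"

definition form_complete :: bool where
  "form_complete \<longleftrightarrow>
     (\<forall>y. range y \<subseteq> S \<longrightarrow> form_Cauchy y \<longrightarrow> (\<exists>z\<in>S. (\<lambda>n. Q (y n - z)) \<longlonglongrightarrow> 0))"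

lemma energy_add:
  "z \<in> S \<Longrightarrow> d \<in> S \<Longrightarrow> energy x (z + d) = energy x z + Q d + 2 * Re (B d z - cinner d x)"
  using commute[of z d] unfolding energy_def by (simp add: Q_add cinner_add_left)

lemma energy_bdd_below: "u \<in> S \<Longrightarrow> - (norm x)\<^sup>2 / A \<le> energy x u"
proof -
  assume u: "u \<in> S"
  have "Re (cinner u x) \<le> norm u * norm x"
    using cinner_Cauchy_Schwarz[of u x] complex_Re_le_cmod order_trans by blast
  then have "A * Re (cinner u x) \<le> A * (norm u * norm x)"
    using A_pos by (simp add: mult_left_mono)
  moreover have "A * (A * (norm u)\<^sup>2) \<le> A * Q u"
    using coercive[OF u] A_pos by (simp add: mult_left_mono)
  moreover have "2 * (A * (norm u * norm x)) \<le> (norm x)\<^sup>2 + A * (A * (norm u)\<^sup>2)"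
    using zero_le_power2[of "A * norm u - norm x"] by (simp add: power2_eq_square algebra_simps)
  ultimately have "- (norm x)\<^sup>2 \<le> A * energy x u"
    unfolding energy_def by (simp add: right_diff_distrib)
  then show ?thesis
    using A_pos by (simp add: field_simps)
qed

lemma energy_midpoint:
  assumes "u \<in> S" and "v \<in> S"
  shows "Q (u - v) = 2 * energy x u + 2 * energy x v - 4 * energy x ((1/2) *\<^sub>C (u + v))"
proof -
  have "Q (u - v) = Q u + Q v - 2 * Re (B u v)"
    using Q_add[OF assms(1) minus_mem[OF assms(2)]] scaleC_right[OF assms(2,1), of "- 1"]
      Q_scaleC[OF assms(2), of "- 1"] by simp
  moreover have "Q ((1/2) *\<^sub>C (u + v)) = (Q u + Q v + 2 * Re (B u v)) / 4"
    using Q_scaleC[OF add_mem[OF assms], of "1/2"] Q_add[OF assms] by (simp add: power2_eq_square)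
  ultimately show ?thesis
    unfolding energy_def by (simp add: cinner_scaleC_left cinner_add_left field_simps)
qed

lemma energy_gap:
  assumes "\<forall>w\<in>S. m \<le> energy x w" and "u \<in> S" and "v \<in> S"
  shows "Q (u - v) \<le> 2 * (energy x u - m) + 2 * (energy x v - m)"
  using energy_midpoint[OF assms(2,3), of x] assms(1) scaleC_mem[OF add_mem[OF assms(2,3)]]
  by fastforce

lemma energy_perturbation:
  assumes z: "z \<in> S" and d: "d \<in> S"
  shows "energy x z \<le> energy x (z + d) + 2 * sqrt (Q d) * sqrt (Q z) + 2 * sqrt (Q d / A) * norm x"
proof -
  have "- Re (B d z) \<le> sqrt (Q d) * sqrt (Q z)"
    using Cauchy_Schwarz[OF d z] abs_Re_le_cmod[of "B d z"] by linarith
  moreover have "norm d \<le> sqrt (Q d / A)"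
    using coercive[OF d] A_pos by (intro real_le_rsqrt) (simp add: field_simps)
  then have "Re (cinner d x) \<le> sqrt (Q d / A) * norm x"
    using cinner_Cauchy_Schwarz[of d x] complex_Re_le_cmod[of "cinner d x"]
    by (meson mult_right_mono norm_ge_zero order_trans)
  ultimately show ?thesis
    using energy_add[OF z d, of x] Q_nonneg[OF d] by simp
qed

lemma minimiser_represents:
  assumes z: "z \<in> S" and minimal: "\<And>u. u \<in> S \<Longrightarrow> energy x z \<le> energy x u" and v: "v \<in> S"
  shows "B v z = cinner v x"
proof -
  txt \<open>Moving from z along a small multiple of -cnj w v lowers the energy unless w = 0.\<close>
  define w where "w = B v z - cinner v x"
  define t where "t = 1 / (Q v + 1)"
  define a where "a = - (complex_of_real t * cnj w)"
  have t: "0 < t" "t * Q v < 1"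
    using Q_nonneg[OF v] unfolding t_def by (simp_all add: field_simps)
  have "energy x z \<le> energy x (z + a *\<^sub>C v)"
    by (intro minimal add_mem scaleC_mem z v)
  then have gain: "0 \<le> (cmod a)\<^sup>2 * Q v + 2 * Re (a * w)"
    using energy_add[OF z scaleC_mem[OF v], of x a] Q_scaleC[OF v, of a]
    by (simp add: scaleC_left[OF v z] cinner_scaleC_left w_def right_diff_distrib)
  have "a * w = - complex_of_real (t * (cmod w)\<^sup>2)"
    by (simp add: a_def complex_norm_square mult_ac del: of_real_power)
  then have Re_aw: "Re (a * w) = - t * (cmod w)\<^sup>2"
    by simp
  have cmod_a: "(cmod a)\<^sup>2 = t\<^sup>2 * (cmod w)\<^sup>2"
    using t by (simp add: a_def norm_mult power_mult_distrib)
  have "0 \<le> t * (cmod w)\<^sup>2 * (t * Q v - 2)"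
    using gain unfolding Re_aw cmod_a by (simp add: power2_eq_square algebra_simps)
  then have "(cmod w)\<^sup>2 \<le> 0"
    using t by (simp add: zero_le_mult_iff mult_le_0_iff)
  then show ?thesis
    unfolding w_def by simp
qed

lemma represents_unique:
  assumes "z \<in> S" "z' \<in> S"
    and "\<And>v. v \<in> S \<Longrightarrow> B v z = cinner v x" and "\<And>v. v \<in> S \<Longrightarrow> B v z' = cinner v x"
  shows "z = z'"
proof -
  have d: "z - z' \<in> S"
    using assms(1,2) by (rule diff_mem)
  then have "B (z - z') (z - z') = 0"
    using assms by (simp add: diff_right)
  then have "A * (norm (z - z'))\<^sup>2 \<le> 0"
    using coercive[OF d] by simp
  then show ?thesis
    using A_pos by (simp add: mult_le_0_iff)
qed

lemma Cauchy_if_form_Cauchy: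
  assumes "range y \<subseteq> S" and "form_Cauchy y"
  shows "Cauchy y"
proof (rule metric_CauchyI)
  fix e :: real
  assume "0 < e"
  then have "0 < A * e\<^sup>2"
    using A_pos by simp
  then obtain N where N: "\<forall>m\<ge>N. \<forall>n\<ge>N. Q (y m - y n) < A * e\<^sup>2"
    using assms(2) unfolding form_Cauchy_def by blast
  have "dist (y m) (y n) < e" if "m \<ge> N" "n \<ge> N" for m n
  proof -
    have "A * (norm (y m - y n))\<^sup>2 < A * e\<^sup>2"
      using coercive[OF diff_mem] assms(1) N that by (meson order_le_less_trans range_subsetD)
    then have "(norm (y m - y n))\<^sup>2 < e\<^sup>2"
      using A_pos by simp
    then show ?thesis
      using \<open>0 < e\<close> by (simp add: dist_norm power2_less_imp_less)
  qed
  then show "\<exists>M. \<forall>m\<ge>M. \<forall>n\<ge>M. dist (y m) (y n) < e"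
    by blast
qed

lemma minimising_form_Cauchy:
  assumes lower: "\<forall>w\<in>S. m \<le> energy x w" and y: "range y \<subseteq> S"
    and lim: "(\<lambda>n. energy x (y n)) \<longlonglongrightarrow> m"
  shows "form_Cauchy y"
  unfolding form_Cauchy_def
proof (intro allI impI)
  fix e :: real
  assume "0 < e"
  then have "eventually (\<lambda>n. energy x (y n) < m + e / 4) sequentially"
    using order_tendstoD(2)[OF lim, of "m + e / 4"] by simp
  then obtain N where N: "\<And>n. n \<ge> N \<Longrightarrow> energy x (y n) < m + e / 4"
    by (auto simp: eventually_sequentially)
  have "Q (y a - y b) < e" if "a \<ge> N" "b \<ge> N" for a b
    using energy_gap[OF lower, of "y a" "y b"] y N[OF that(1)] N[OF that(2)] by fastforce
  then show "\<exists>N. \<forall>a\<ge>N. \<forall>b\<ge>N. Q (y a - y b) < e"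
    by blast
qed

lemma minimising_limit_minimal:
  assumes y: "range y \<subseteq> S" and lim: "(\<lambda>n. energy x (y n)) \<longlonglongrightarrow> m"
    and z: "z \<in> S" and conv: "(\<lambda>n. Q (y n - z)) \<longlonglongrightarrow> 0"
  shows "energy x z \<le> m"
proof (rule LIMSEQ_le_const)
  let ?bound = "\<lambda>n. energy x (y n) + 2 * sqrt (Q (y n - z)) * sqrt (Q z)
    + 2 * sqrt (Q (y n - z) / A) * norm x"
  have "?bound \<longlonglongrightarrow> m + 2 * sqrt 0 * sqrt (Q z) + 2 * sqrt (0 / A) * norm x"
    by (intro tendsto_intros lim conv) (use A_pos in simp)
  then show "?bound \<longlonglongrightarrow> m"
    by simp
  show "\<exists>N. \<forall>n\<ge>N. energy x z \<le> ?bound n"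
  proof (intro exI[of _ 0] allI impI)
    fix n
    have "y n - z \<in> S"
      using y z by (simp add: diff_mem range_subsetD)
    then show "energy x z \<le> ?bound n"
      using energy_perturbation[OF z, of "y n - z" x] by simp
  qed
qed

lemma minimiser_exists:
  assumes form_complete
  shows "\<exists>z\<in>S. \<forall>u\<in>S. energy x z \<le> energy x u"
proof -
  define m where "m = Inf (energy x ` S)"
  have bdd: "bdd_below (energy x ` S)"
    using energy_bdd_below by (rule bdd_belowI2)
  then have lower: "\<forall>w\<in>S. m \<le> energy x w"
    unfolding m_def by (simp add: cInf_lower)
  have "m \<in> closure (energy x ` S)"
    unfolding m_def using bdd zero_mem by (intro closure_contains_Inf) auto
  then obtain t where t: "\<forall>n. t n \<in> energy x ` S" and "t \<longlonglongrightarrow> m"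
    unfolding closure_sequential by blast
  have "\<forall>n. \<exists>u. u \<in> S \<and> energy x u = t n"
    using t by (metis imageE)
  then obtain y where yt: "\<forall>n. y n \<in> S \<and> energy x (y n) = t n"
    by (metis choice)
  then have y: "range y \<subseteq> S" and lim: "(\<lambda>n. energy x (y n)) \<longlonglongrightarrow> m"
    using \<open>t \<longlonglongrightarrow> m\<close> by auto
  obtain z where z: "z \<in> S" and conv: "(\<lambda>n. Q (y n - z)) \<longlonglongrightarrow> 0"
    using assms y minimising_form_Cauchy[OF lower y lim] unfolding form_complete_def by blast
  show ?thesis
    using minimising_limit_minimal[OF y lim z conv] lower z by (meson order_trans)
qed

theorem Riesz_representation:
  assumes form_complete
  shows "\<exists>!z. z \<in> S \<and> (\<forall>v\<in>S. B v z = cinner v x)"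
proof -
  obtain z where z: "z \<in> S" "\<forall>u\<in>S. energy x z \<le> energy x u"
    using minimiser_exists[OF assms] by blast
  then have "\<forall>v\<in>S. B v z = cinner v x"
    using minimiser_represents by blast
  with z(1) show ?thesis
    using represents_unique by blast
qed

end

lemma orth_proj_onto_closed_subspace:
  fixes S :: "'a::{complex_inner, complete_space} set"
  assumes "closed S" and "0 \<in> S" and "\<And>u v. u \<in> S \<Longrightarrow> v \<in> S \<Longrightarrow> u + v \<in> S"
    and "\<And>a u. u \<in> S \<Longrightarrow> a *\<^sub>C u \<in> S"
  shows "orth_proj S x \<in> S \<and> (\<forall>z\<in>S. cinner (x - orth_proj S x) z = 0)"
proof -
  interpret coercive_hermitian_form S cinner 1
    by (rule coercive_hermitian_form_cinner) (use assms in auto)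
  have form_complete
    unfolding form_complete_def
  proof (intro allI impI)
    fix y
    assume y: "range y \<subseteq> S" "form_Cauchy y"
    then obtain z where lim: "y \<longlonglongrightarrow> z"
      using Cauchy_if_form_Cauchy Cauchy_convergent_iff convergent_def by blast
    then have "z \<in> S"
      using assms(1) y(1) closed_sequentially by blast
    moreover have "(\<lambda>n. (norm (y n - z))\<^sup>2) \<longlonglongrightarrow> 0\<^sup>2"
      using lim by (intro tendsto_power tendsto_norm_zero LIM_zero)
    ultimately show "\<exists>z\<in>S. (\<lambda>n. Re (cinner (y n - z) (y n - z))) \<longlonglongrightarrow> 0"
      by (auto simp: Re_cinner_self power2_eq_square)
  qed
  then have "\<exists>!y. y \<in> S \<and> (\<forall>v\<in>S. cinner v y = cinner v x)"
    by (rule Riesz_representation)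
  moreover have "cinner (x - y) v = 0 \<longleftrightarrow> cinner v y = cinner v x" for y v
    using cinner_commute[of "x - y" v] by (auto simp: cinner_diff_right)
  ultimately have "\<exists>!y. y \<in> S \<and> (\<forall>z\<in>S. cinner (x - y) z = 0)"
    by simp
  then show ?thesis
    unfolding orth_proj_def by (rule theI')
qed

section \<open>The frame form\<close>

lemma cmod_add_sq_le: "(cmod (a + b))\<^sup>2 \<le> 2 * (cmod a)\<^sup>2 + 2 * (cmod b)\<^sup>2"
proof -
  have "(cmod (a + b))\<^sup>2 \<le> (cmod a + cmod b)\<^sup>2"
    by (simp add: norm_triangle_ineq power_mono)
  also have "\<dots> \<le> 2 * (cmod a)\<^sup>2 + 2 * (cmod b)\<^sup>2"
    using zero_le_power2[of "cmod a - cmod b"] by (simp add: power2_eq_square algebra_simps)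
  finally show ?thesis .
qed

lemma cmod_mult_cnj_le: "cmod (a * cnj b) \<le> ((cmod a)\<^sup>2 + (cmod b)\<^sup>2) / 2"
  using zero_le_power2[of "cmod a - cmod b"] by (simp add: norm_mult power2_eq_square algebra_simps)

lemma zero_in_dom_C: "0 \<in> dom_C I \<psi>"
  unfolding dom_C_def by simp

lemma dom_C_add:
  assumes "f \<in> dom_C I \<psi>" and "g \<in> dom_C I \<psi>"
  shows "f + g \<in> dom_C I \<psi>"
proof -
  have "(\<lambda>i. 2 * (cmod (cinner f (\<psi> i)))\<^sup>2 + 2 * (cmod (cinner g (\<psi> i)))\<^sup>2) summable_on I"
    using assms unfolding dom_C_def by (intro summable_on_add summable_on_cmult_right) auto
  then show ?thesis
    unfolding dom_C_def mem_Collect_eq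
    by (rule summable_on_comparison_test) (simp_all add: cinner_add_left cmod_add_sq_le)
qed

lemma dom_C_scaleC: "f \<in> dom_C I \<psi> \<Longrightarrow> a *\<^sub>C f \<in> dom_C I \<psi>"
  unfolding dom_C_def
  by (simp add: cinner_scaleC_left norm_mult power_mult_distrib summable_on_cmult_right)

lemma dom_C_diff: "f \<in> dom_C I \<psi> \<Longrightarrow> g \<in> dom_C I \<psi> \<Longrightarrow> f - g \<in> dom_C I \<psi>"
  using dom_C_add[OF _ dom_C_scaleC, of f I \<psi> g "- 1"] by simp

definition frame_form :: "'i set \<Rightarrow> ('i \<Rightarrow> 'a::complex_inner) \<Rightarrow> 'a \<Rightarrow> 'a \<Rightarrow> complex" where
  "frame_form I \<psi> f g = l2_inner I (\<lambda>i. cinner f (\<psi> i)) (\<lambda>i. cinner g (\<psi> i))"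

lemma summable_on_frame_form:
  assumes "f \<in> dom_C I \<psi>" and "g \<in> dom_C I \<psi>"
  shows "(\<lambda>i. cinner f (\<psi> i) * cnj (cinner g (\<psi> i))) summable_on I"
proof -
  have "(\<lambda>i. ((cmod (cinner f (\<psi> i)))\<^sup>2 + (cmod (cinner g (\<psi> i)))\<^sup>2) / 2) summable_on I"
    using assms unfolding dom_C_def divide_inverse
    by (intro summable_on_cmult_left summable_on_add) auto
  then have "(\<lambda>i. norm (cinner f (\<psi> i) * cnj (cinner g (\<psi> i)))) summable_on I"
    by (rule summable_on_comparison_test) (simp_all only: cmod_mult_cnj_le norm_ge_zero)
  then show ?thesis
    using summable_on_iff_abs_summable_on_complex by blast
qed

lemma frame_form_self:
  assumes "f \<in> dom_C I \<psi>"
  shows "frame_form I \<psi> f f = complex_of_real (\<Sum>\<^sub>\<infinity>i\<in>I. (cmod (cinner f (\<psi> i)))\<^sup>2)"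
proof -
  have "frame_form I \<psi> f f = (\<Sum>\<^sub>\<infinity>i\<in>I. complex_of_real ((cmod (cinner f (\<psi> i)))\<^sup>2))"
    unfolding frame_form_def l2_inner_def by (simp only: complex_norm_square)
  also have "\<dots> = complex_of_real (\<Sum>\<^sub>\<infinity>i\<in>I. (cmod (cinner f (\<psi> i)))\<^sup>2)"
    using assms unfolding dom_C_def by (intro infsumI has_sum_of_real has_sum_infsum) simp
  finally show ?thesis .
qed

lemma has_sum_frame_energy:
  assumes "f \<in> dom_C I \<psi>"
  shows "((\<lambda>i. (cmod (cinner f (\<psi> i)))\<^sup>2) has_sum Re (frame_form I \<psi> f f)) I"
  using assms unfolding frame_form_self[OF assms] dom_C_def by (simp add: has_sum_infsum)

lemma frame_form_commute: "frame_form I \<psi> f g = cnj (frame_form I \<psi> g f)"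
  unfolding frame_form_def l2_inner_def by (simp flip: infsum_cnj add: mult.commute)

lemma coercive_hermitian_form_frame_form:
  assumes "0 < A" and "\<forall>f\<in>dom_C I \<psi>. A * (norm f)\<^sup>2 \<le> (\<Sum>\<^sub>\<infinity>i\<in>I. (cmod (cinner f (\<psi> i)))\<^sup>2)"
  shows "coercive_hermitian_form (dom_C I \<psi>) (frame_form I \<psi>) A"
proof
  show "frame_form I \<psi> (u + v) w = frame_form I \<psi> u w + frame_form I \<psi> v w"
    if "u \<in> dom_C I \<psi>" "v \<in> dom_C I \<psi>" "w \<in> dom_C I \<psi>" for u v w
    using that unfolding frame_form_def l2_inner_def
    by (simp add: cinner_add_left distrib_right infsum_add summable_on_frame_form)
  show "frame_form I \<psi> (a *\<^sub>C u) w = a * frame_form I \<psi> u w"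
    if "u \<in> dom_C I \<psi>" "w \<in> dom_C I \<psi>" for a u w
    using that unfolding frame_form_def l2_inner_def
    by (simp add: cinner_scaleC_left mult.assoc infsum_cmult_right summable_on_frame_form)
  show "A * (norm u)\<^sup>2 \<le> Re (frame_form I \<psi> u u)" if "u \<in> dom_C I \<psi>" for u
    using assms(2) that by (simp add: frame_form_self)
qed (simp_all add: assms(1) frame_form_commute [symmetric] zero_in_dom_C dom_C_add dom_C_scaleC)

lemma dom_C_sublevel_limit:
  assumes lim: "X \<longlonglongrightarrow> x"
    and bound: "eventually (\<lambda>m. X m \<in> dom_C I \<psi> \<and> (\<Sum>\<^sub>\<infinity>i\<in>I. (cmod (cinner (X m) (\<psi> i)))\<^sup>2) \<le> e)
      sequentially"
  shows "x \<in> dom_C I \<psi> \<and> (\<Sum>\<^sub>\<infinity>i\<in>I. (cmod (cinner x (\<psi> i)))\<^sup>2) \<le> e"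
proof -
  have partial: "(\<Sum>i\<in>F. (cmod (cinner x (\<psi> i)))\<^sup>2) \<le> e" if "finite F" "F \<subseteq> I" for F
  proof (rule tendsto_upperbound)
    show "(\<lambda>m. \<Sum>i\<in>F. (cmod (cinner (X m) (\<psi> i)))\<^sup>2) \<longlonglongrightarrow> (\<Sum>i\<in>F. (cmod (cinner x (\<psi> i)))\<^sup>2)"
      by (intro tendsto_intros bounded_linear.tendsto[OF bounded_linear_cinner_left] lim)
    show "eventually (\<lambda>m. (\<Sum>i\<in>F. (cmod (cinner (X m) (\<psi> i)))\<^sup>2) \<le> e) sequentially"
      using bound
    proof eventually_elim
      case (elim m)
      have "(\<Sum>i\<in>F. (cmod (cinner (X m) (\<psi> i)))\<^sup>2) \<le> (\<Sum>\<^sub>\<infinity>i\<in>I. (cmod (cinner (X m) (\<psi> i)))\<^sup>2)"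
        using elim that by (intro finite_sum_le_infsum) (auto simp: dom_C_def)
      with elim show ?case
        by linarith
    qed
  qed simp
  have "(\<lambda>i. (cmod (cinner x (\<psi> i)))\<^sup>2) summable_on I"
    by (rule nonneg_bdd_above_summable_on) (auto intro!: bdd_aboveI2 partial)
  then show ?thesis
    unfolding dom_C_def using infsum_le_finite_sums partial by blast
qed

lemma dom_C_Cauchy_limit:
  assumes y: "range y \<subseteq> dom_C I \<psi>" and lim: "y \<longlonglongrightarrow> z" and "0 < e"
    and Cauchy: "\<forall>e>0. \<exists>N. \<forall>m\<ge>N. \<forall>n\<ge>N. (\<Sum>\<^sub>\<infinity>i\<in>I. (cmod (cinner (y m - y n) (\<psi> i)))\<^sup>2) < e"
  shows "\<exists>N. \<forall>n\<ge>N. y n - z \<in> dom_C I \<psi> \<and> (\<Sum>\<^sub>\<infinity>i\<in>I. (cmod (cinner (y n - z) (\<psi> i)))\<^sup>2) \<le> e"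
proof -
  obtain N where N: "\<forall>m\<ge>N. \<forall>n\<ge>N. (\<Sum>\<^sub>\<infinity>i\<in>I. (cmod (cinner (y m - y n) (\<psi> i)))\<^sup>2) < e"
    using Cauchy \<open>0 < e\<close> by blast
  have "y n - z \<in> dom_C I \<psi> \<and> (\<Sum>\<^sub>\<infinity>i\<in>I. (cmod (cinner (y n - z) (\<psi> i)))\<^sup>2) \<le> e"
    if "n \<ge> N" for n
  proof (rule dom_C_sublevel_limit[OF tendsto_diff[OF tendsto_const lim]])
    have "y n - y m \<in> dom_C I \<psi> \<and> (\<Sum>\<^sub>\<infinity>i\<in>I. (cmod (cinner (y n - y m) (\<psi> i)))\<^sup>2) \<le> e"
      if "m \<ge> N" for m
      using y N \<open>n \<ge> N\<close> that by (simp add: dom_C_diff range_subsetD less_imp_le)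
    then show "eventually (\<lambda>m. y n - y m \<in> dom_C I \<psi> \<and>
        (\<Sum>\<^sub>\<infinity>i\<in>I. (cmod (cinner (y n - y m) (\<psi> i)))\<^sup>2) \<le> e) sequentially"
      unfolding eventually_sequentially by blast
  qed
  then show ?thesis
    by blast
qed

lemma frame_form_complete:
  fixes \<psi> :: "'i \<Rightarrow> 'a::{complex_inner, complete_space}"
  assumes "0 < A" and "\<forall>f\<in>dom_C I \<psi>. A * (norm f)\<^sup>2 \<le> (\<Sum>\<^sub>\<infinity>i\<in>I. (cmod (cinner f (\<psi> i)))\<^sup>2)"
  shows "coercive_hermitian_form.form_complete (dom_C I \<psi>) (frame_form I \<psi>)"
proof -
  interpret coercive_hermitian_form "dom_C I \<psi>" "frame_form I \<psi>" A
    using assms by (rule coercive_hermitian_form_frame_form)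
  show ?thesis
    unfolding form_complete_def
  proof (intro allI impI)
    fix y
    assume y: "range y \<subseteq> dom_C I \<psi>" "form_Cauchy y"
    then obtain z where lim: "y \<longlonglongrightarrow> z"
      using Cauchy_if_form_Cauchy Cauchy_convergent_iff convergent_def by blast
    have Q_frame_energy: "Q (y m - y n) = (\<Sum>\<^sub>\<infinity>i\<in>I. (cmod (cinner (y m - y n) (\<psi> i)))\<^sup>2)" for m n
      using y(1) by (simp add: frame_form_self dom_C_diff range_subsetD)
    have near: "\<exists>N. \<forall>n\<ge>N. y n - z \<in> dom_C I \<psi> \<and> Q (y n - z) \<le> e" if e: "0 < e" for e
    proof -
      obtain N where "\<forall>n\<ge>N. y n - z \<in> dom_C I \<psi> \<and>
          (\<Sum>\<^sub>\<infinity>i\<in>I. (cmod (cinner (y n - z) (\<psi> i)))\<^sup>2) \<le> e"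
        using dom_C_Cauchy_limit[OF y(1) lim e] y(2) unfolding form_Cauchy_def Q_frame_energy
        by blast
      then show ?thesis
        by (auto simp: frame_form_self)
    qed
    obtain N where "y N - z \<in> dom_C I \<psi>"
      using near[of 1] by auto
    then have "z \<in> dom_C I \<psi>"
      using diff_mem[of "y N" "y N - z"] y(1) by auto
    moreover have "(\<lambda>n. Q (y n - z)) \<longlonglongrightarrow> 0"
    proof (rule LIMSEQ_I)
      fix r :: real
      assume "0 < r"
      then obtain N where "\<forall>n\<ge>N. y n - z \<in> dom_C I \<psi> \<and> Q (y n - z) \<le> r / 2"
        using near[of "r / 2"] by auto
      then show "\<exists>N. \<forall>n\<ge>N. norm (Q (y n - z) - 0) < r"
        using Q_nonneg \<open>0 < r\<close> by fastforce
    qed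
    ultimately show "\<exists>z\<in>dom_C I \<psi>. (\<lambda>n. Q (y n - z)) \<longlonglongrightarrow> 0"
      by blast
  qed
qed

lemma frame_form_Riesz:
  fixes \<psi> :: "'i \<Rightarrow> 'a::{complex_inner, complete_space}"
  assumes "lower_frame_seq I \<psi>"
  shows "\<exists>!f. f \<in> dom_C I \<psi> \<and> (\<forall>g\<in>dom_C I \<psi>. frame_form I \<psi> g f = cinner g x)"
proof -
  obtain A where A: "0 < A" "\<forall>f\<in>dom_C I \<psi>. A * (norm f)\<^sup>2 \<le> (\<Sum>\<^sub>\<infinity>i\<in>I. (cmod (cinner f (\<psi> i)))\<^sup>2)"
    using assms unfolding lower_frame_seq_def by blast
  then interpret coercive_hermitian_form "dom_C I \<psi>" "frame_form I \<psi>" A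
    by (rule coercive_hermitian_form_frame_form)
  show ?thesis
    using frame_form_complete[OF A] by (rule Riesz_representation)
qed

section \<open>The canonical dual\<close>

lemma orth_proj_H_Psi:
  fixes \<psi> :: "'i \<Rightarrow> 'a::{complex_inner, complete_space}"
  shows "orth_proj (H_Psi I \<psi>) x \<in> H_Psi I \<psi> \<and>
    (\<forall>z\<in>H_Psi I \<psi>. cinner (x - orth_proj (H_Psi I \<psi>) x) z = 0)"
  unfolding H_Psi_def
  by (rule orth_proj_onto_closed_subspace)
    (auto intro: closure_add_mem closure_scaleC_mem dom_C_add dom_C_scaleC
      closure_subset [THEN subsetD] zero_in_dom_C)

lemma gen_frame_op_rel_orth_proj_iff:
  fixes \<psi> :: "'i \<Rightarrow> 'a::{complex_inner, complete_space}"
  shows "gen_frame_op_rel I \<psi> f (orth_proj (H_Psi I \<psi>) x) \<longleftrightarrow>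
    f \<in> dom_C I \<psi> \<and> (\<forall>g\<in>dom_C I \<psi>. frame_form I \<psi> g f = cinner g x)"
proof -
  let ?p = "orth_proj (H_Psi I \<psi>) x"
  have "cinner g ?p = cinner g x" if "g \<in> dom_C I \<psi>" for g
  proof -
    have "g \<in> H_Psi I \<psi>"
      using that closure_subset unfolding H_Psi_def by blast
    then have "cinner g (x - ?p) = 0"
      using orth_proj_H_Psi cinner_commute[of g "x - ?p"] by fastforce
    then show ?thesis
      by (simp add: cinner_diff_right)
  qed
  then show ?thesis
    using orth_proj_H_Psi
    unfolding gen_frame_op_rel_def adjC_rel_def frame_form_def l2_def dom_C_def by auto
qed

lemma canonical_dual_represents:
  fixes \<psi> :: "'i \<Rightarrow> 'a::{complex_inner, complete_space}"
  assumes "lower_frame_seq I \<psi>"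
  shows "canonical_dual I \<psi> i \<in> dom_C I \<psi> \<and>
    (\<forall>g\<in>dom_C I \<psi>. frame_form I \<psi> g (canonical_dual I \<psi> i) = cinner g (\<psi> i))"
  using frame_form_Riesz[OF assms, of "\<psi> i"]
  unfolding canonical_dual_def gen_frame_op_rel_orth_proj_iff by (rule theI')

lemma canonical_dual_coefficient:
  fixes \<psi> :: "'i \<Rightarrow> 'a::{complex_inner, complete_space}"
  assumes "lower_frame_seq I \<psi>"
    and "f \<in> dom_C I \<psi>" and "\<forall>g\<in>dom_C I \<psi>. frame_form I \<psi> g f = cinner g h"
  shows "cinner h (canonical_dual I \<psi> i) = cinner f (\<psi> i)"
proof -
  let ?d = "canonical_dual I \<psi> i"
  have d: "?d \<in> dom_C I \<psi>" "\<forall>g\<in>dom_C I \<psi>. frame_form I \<psi> g ?d = cinner g (\<psi> i)"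
    using canonical_dual_represents[OF assms(1)] by blast+
  have "cinner h ?d = cnj (frame_form I \<psi> ?d f)"
    using assms(3) d(1) cinner_commute[of h ?d] by simp
  also have "\<dots> = cinner f (\<psi> i)"
    using d(2) assms(2) frame_form_commute[of I \<psi> f ?d] by simp
  finally show ?thesis .
qed

section \<open>A Pythagorean identity for square-summable sequences\<close>

lemma ennreal_infsum_summable:
  assumes "f summable_on I" and "\<And>i. i \<in> I \<Longrightarrow> 0 \<le> f i"
  shows "(\<Sum>\<^sub>\<infinity>i\<in>I. ennreal (f i)) = ennreal (\<Sum>\<^sub>\<infinity>i\<in>I. f i)"
proof -
  have "infsum (ennreal \<circ> f) I = ennreal (infsum f I)"
    by (rule infsum_comm_additive_general) (use assms in \<open>auto intro!: sum_ennreal\<close>)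
  then show ?thesis
    by (simp add: o_def)
qed

lemma ennreal_infsum_not_summable:
  assumes "\<not> f summable_on I" and "\<And>i. i \<in> I \<Longrightarrow> 0 \<le> f i"
  shows "(\<Sum>\<^sub>\<infinity>i\<in>I. ennreal (f i)) = top"
proof (rule ccontr)
  define s where "s = (\<Sum>\<^sub>\<infinity>i\<in>I. ennreal (f i))"
  assume "s \<noteq> top"
  have "sum f F \<le> enn2real s" if "finite F" "F \<subseteq> I" for F
  proof -
    have "ennreal (sum f F) = (\<Sum>i\<in>F. ennreal (f i))"
      using that assms(2) by (auto intro!: sum_ennreal [symmetric])
    also have "\<dots> \<le> s"
      unfolding s_def nonneg_infsum_complete[of I "\<lambda>i. ennreal (f i)", simplified]
      using that by (auto intro: SUP_upper)
    also have "\<dots> = ennreal (enn2real s)"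
      using \<open>s \<noteq> top\<close> by (simp add: top.not_eq_extremum)
    finally show ?thesis
      using enn2real_nonneg[of s] unfolding ennreal_le_iff2 by linarith
  qed
  then have "f summable_on I"
    by (intro nonneg_bdd_above_summable_on bdd_aboveI2) (auto simp: assms(2))
  with assms(1) show False
    by contradiction
qed

lemma cmod_diff_sq: "(cmod (a - b))\<^sup>2 = (cmod a)\<^sup>2 + (cmod b)\<^sup>2 - 2 * Re (a * cnj b)"
  by (simp only: cmod_power2) (simp add: power2_eq_square algebra_simps)

lemma ennreal_infsum_cmod_sq_pythagoras:
  fixes c d :: "'i \<Rightarrow> complex"
  assumes d: "((\<lambda>i. (cmod (d i))\<^sup>2) has_sum r) I"
    and cross: "((\<lambda>i. Re (c i * cnj (d i))) has_sum r) I"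
  shows "(\<Sum>\<^sub>\<infinity>i\<in>I. ennreal ((cmod (c i))\<^sup>2)) =
    (\<Sum>\<^sub>\<infinity>i\<in>I. ennreal ((cmod (d i))\<^sup>2)) + (\<Sum>\<^sub>\<infinity>i\<in>I. ennreal ((cmod (c i - d i))\<^sup>2))"
proof (cases "(\<lambda>i. (cmod (c i))\<^sup>2) summable_on I")
  case True
  let ?C = "\<Sum>\<^sub>\<infinity>i\<in>I. (cmod (c i))\<^sup>2"
  have "((\<lambda>i. (cmod (c i))\<^sup>2 + (cmod (d i))\<^sup>2 + (- 2) * Re (c i * cnj (d i)))
      has_sum (?C + r + (- 2) * r)) I"
    by (intro has_sum_add has_sum_cmult_right has_sum_infsum True d cross)
  moreover have "(\<lambda>i. (cmod (c i - d i))\<^sup>2) =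
      (\<lambda>i. (cmod (c i))\<^sup>2 + (cmod (d i))\<^sup>2 + (- 2) * Re (c i * cnj (d i)))"
    by (simp add: cmod_diff_sq algebra_simps)
  ultimately have diff: "((\<lambda>i. (cmod (c i - d i))\<^sup>2) has_sum (?C - r)) I"
    by simp
  have "0 \<le> r" "0 \<le> ?C - r"
    using has_sum_nonneg d diff by force+
  moreover have "(\<Sum>\<^sub>\<infinity>i\<in>I. ennreal ((cmod (c i))\<^sup>2)) = ennreal ?C"
    using True by (simp add: ennreal_infsum_summable)
  moreover have "(\<Sum>\<^sub>\<infinity>i\<in>I. ennreal ((cmod (d i))\<^sup>2)) = ennreal r"
    using d by (simp add: ennreal_infsum_summable has_sum_imp_summable infsumI)
  moreover have "(\<Sum>\<^sub>\<infinity>i\<in>I. ennreal ((cmod (c i - d i))\<^sup>2)) = ennreal (?C - r)"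
    using diff by (simp add: ennreal_infsum_summable has_sum_imp_summable infsumI)
  ultimately show ?thesis
    by (simp flip: ennreal_plus)
next
  case False
  have "\<not> (\<lambda>i. (cmod (c i - d i))\<^sup>2) summable_on I"
  proof
    assume "(\<lambda>i. (cmod (c i - d i))\<^sup>2) summable_on I"
    then have "(\<lambda>i. 2 * (cmod (d i))\<^sup>2 + 2 * (cmod (c i - d i))\<^sup>2) summable_on I"
      using d by (intro summable_on_add summable_on_cmult_right) (auto dest: has_sum_imp_summable)
    then have "(\<lambda>i. (cmod (c i))\<^sup>2) summable_on I"
      by (rule summable_on_comparison_test) (use cmod_add_sq_le[of "d i" "c i - d i" for i] in simp_all)
    with False show False
      by contradiction
  qed
  then show ?thesis
    using False by (simp add: ennreal_infsum_not_summable)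
qed

theorem lemma6p13:
  fixes I :: "'i set" and \<psi> :: "'i \<Rightarrow> 'a::{complex_inner, complete_space}"
    and h :: 'a and c :: "'i \<Rightarrow> complex"
  assumes separable: "\<exists>D::'a set. countable D \<and> closure D = UNIV"
    and countI: "countable I"
    and lfs: "lower_frame_seq I \<psi>"
    and weak_rep: "\<forall>g\<in>dom_C I \<psi>. ((\<lambda>i. c i * cinner (\<psi> i) g) has_sum cinner h g) I"
  shows "(\<Sum>\<^sub>\<infinity>i\<in>I. ennreal ((cmod (c i))\<^sup>2)) =
           (\<Sum>\<^sub>\<infinity>i\<in>I. ennreal ((cmod (cinner h (canonical_dual I \<psi> i)))\<^sup>2))
         + (\<Sum>\<^sub>\<infinity>i\<in>I. ennreal ((cmod (c i - cinner h (canonical_dual I \<psi> i)))\<^sup>2))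
     \<and> (\<Sum>\<^sub>\<infinity>i\<in>I. ennreal ((cmod (cinner h (canonical_dual I \<psi> i)))\<^sup>2))
         \<le> (\<Sum>\<^sub>\<infinity>i\<in>I. ennreal ((cmod (c i))\<^sup>2))"
proof -
  obtain f where f: "f \<in> dom_C I \<psi>" "\<forall>g\<in>dom_C I \<psi>. frame_form I \<psi> g f = cinner g h"
    using frame_form_Riesz[OF lfs] by blast
  have "((\<lambda>i. (cmod (cinner f (\<psi> i)))\<^sup>2) has_sum Re (cinner h f)) I"
    using has_sum_frame_energy[OF f(1)] f cinner_commute[of h f] by simp
  moreover have "((\<lambda>i. Re (c i * cnj (cinner f (\<psi> i)))) has_sum Re (cinner h f)) I"
    using has_sum_Re[OF weak_rep[rule_format, OF f(1)]] cinner_commute[of _ f] by simp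
  ultimately have "(\<Sum>\<^sub>\<infinity>i\<in>I. ennreal ((cmod (c i))\<^sup>2)) =
      (\<Sum>\<^sub>\<infinity>i\<in>I. ennreal ((cmod (cinner f (\<psi> i)))\<^sup>2))
      + (\<Sum>\<^sub>\<infinity>i\<in>I. ennreal ((cmod (c i - cinner f (\<psi> i)))\<^sup>2))"
    by (rule ennreal_infsum_cmod_sq_pythagoras)
  then show ?thesis
    unfolding canonical_dual_coefficient[OF lfs f] using le_iff_add by blast
qed

end
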